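(* For every finite set $J$, the signatures $\mathrm{Even}_J$, $\mathrm{Odd}_J$ and $\mathrm{NAE}_J$ are strictly terraced. Moreover $\mathrm{Prat}(\mathrm{Even}_J)=\mathrm{Prat}(\mathrm{Odd}_J)=0$ and $\mathrm{Prat}(\mathrm{NAE}_J)\le3$.
   Context: $\mathrm{Even}_J(x)=1$ iff $\sum_ix_i$ is even; $\mathrm{Odd}_J(x)=1$ iff $\sum_ix_i$ is odd; $\mathrm{NAE}_J(x)=1$ iff $1\le\sum_ix_i\le|J|-1$ (each $0$ otherwise). Parity relations are the signatures $\mathrm{Even}_K$, $\mathrm{Odd}_K$ (and their copies). $e_i$ is the characteristic vector of $\{i\}$ and $\oplus$ is coordinatewise addition mod 2. A signature $F:\{0,1\}^J\to\mathbb{Q}_{\ge0}$ is strictly terraced if for all $x$ and $i,j\in J$, $F(x)=0$ implies $F(x\oplus e_i)=F(x\oplus e_j)$. A circuit $\phi$: finite set $J$ of incidences, vertices $V$ with sets $J_v$ partitioning $J$, external edges $A\subseteq J$, a partition $E$ of $J\setminus A$ into pairs, constraints $F_v:\{0,1\}^{J_v}\to\mathbb{Q}_{\ge0}$; assignments are $x$ with $x_i=x_j$ for $\{i,j\}\in E$; $[\![\phi]\!](x)=\sum_{x'}\prod_vF_v(x'|_{J_v})$ over assignments $x'$ extending $x\in\{0,1\}^A$. A copy of $F:\{0,1\}^I\to\mathbb{Q}_{\ge0}$ is $x\mapsto F(x\circ\pi)$ for a bijection $\pi$. For $F$ not identically zero, a parity-signature of $F$ is a positive constant multiple of $[\![\phi]\!]$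 for a circuit $\phi$ with exactly one constraint a copy of $F$ and all other constraints copies of parity relations. $\mathrm{Prat}(F)=\max\{F'(0)/F'(1)\}$ over parity-signatures $F':\{0,1\}\to\mathbb{Q}_{\ge0}$ of $F$ (one external edge) with $F'(1)>0$; $\mathrm{Prat}(F)=0$ if $F$ is identically zero. *)

theory Defs
  imports "HOL-Analysis.Analysis"
begin

text \<open>An assignment x in {0,1}^J is represented by its support, a subset of J
  (the set of coordinates equal to 1); so sum_i x_i = card x, and x XOR e_i is flip x i.\<close>

definition flip :: "'a set \<Rightarrow> 'a \<Rightarrow> 'a set" where
  "flip x i = (if i \<in> x then x - {i} else insert i x)"

definition even_rel :: "'a set \<Rightarrow> 'a set \<Rightarrow> rat" where
  "even_rel J x = (if even (card (x \<inter> J)) then 1 else 0)"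

definition odd_rel :: "'a set \<Rightarrow> 'a set \<Rightarrow> rat" where
  "odd_rel J x = (if odd (card (x \<inter> J)) then 1 else 0)"

definition nae_rel :: "'a set \<Rightarrow> 'a set \<Rightarrow> rat" where
  "nae_rel J x = (if 1 \<le> card (x \<inter> J) \<and> card (x \<inter> J) + 1 \<le> card J then 1 else 0)"

definition strictly_terraced :: "'a set \<Rightarrow> ('a set \<Rightarrow> rat) \<Rightarrow> bool" where
  "strictly_terraced J F \<longleftrightarrow>
     (\<forall>x i j. x \<subseteq> J \<longrightarrow> i \<in> J \<longrightarrow> j \<in> J \<longrightarrow> F x = 0 \<longrightarrow> F (flip x i) = F (flip x j))"

definition is_copy :: "'a set \<Rightarrow> ('a set \<Rightarrow> rat) \<Rightarrow> 'b set \<Rightarrow> ('b set \<Rightarrow> rat) \<Rightarrow> bool" where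
  "is_copy I F K G \<longleftrightarrow> (\<exists>\<pi>. bij_betw \<pi> I K \<and> (\<forall>y. y \<subseteq> K \<longrightarrow> G y = F (I \<inter> \<pi> -` y)))"

text \<open>Circuits: incidences Jc, vertices V with incidence sets Jv v partitioning Jc,
  external edges A, internal edges E (a partition of Jc - A into pairs), constraints Fv v.
  Incidences and vertices are taken from nat (every finite circuit is isomorphic to one of these).\<close>
definition is_circuit :: "nat set \<Rightarrow> nat set \<Rightarrow> (nat \<Rightarrow> nat set) \<Rightarrow> nat set \<Rightarrow> nat set set \<Rightarrow> bool" where
  "is_circuit Jc V Jv A E \<longleftrightarrow>
     finite Jc \<and> finite V \<and> (\<Union>v\<in>V. Jv v) = Jc \<and>
     (\<forall>v\<in>V. \<forall>w\<in>V. v \<noteq> w \<longrightarrow> Jv v \<inter> Jv w = {}) \<and>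
     A \<subseteq> Jc \<and> (\<forall>e\<in>E. card e = 2) \<and> \<Union>E = Jc - A \<and>
     (\<forall>e\<in>E. \<forall>f\<in>E. e \<noteq> f \<longrightarrow> e \<inter> f = {})"

definition circuit_value :: "nat set \<Rightarrow> nat set \<Rightarrow> (nat \<Rightarrow> nat set) \<Rightarrow> nat set \<Rightarrow> nat set set
    \<Rightarrow> (nat \<Rightarrow> nat set \<Rightarrow> rat) \<Rightarrow> nat set \<Rightarrow> rat" where
  "circuit_value Jc V Jv A E Fv x =
     (\<Sum>x' \<in> {x'. x' \<subseteq> Jc \<and> x' \<inter> A = x \<and> (\<forall>e\<in>E. e \<subseteq> x' \<or> e \<inter> x' = {})}.
        \<Prod>v\<in>V. Fv v (x' \<inter> Jv v))"

definition parity_constraint :: "nat set \<Rightarrow> (nat set \<Rightarrow> rat) \<Rightarrow> bool" where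
  "parity_constraint K' G \<longleftrightarrow>
     (\<exists>K :: nat set. finite K \<and> (is_copy K (even_rel K) K' G \<or> is_copy K (odd_rel K) K' G))"

definition parity_circuit :: "'a set \<Rightarrow> ('a set \<Rightarrow> rat) \<Rightarrow> nat set \<Rightarrow> nat set \<Rightarrow> (nat \<Rightarrow> nat set)
    \<Rightarrow> nat set \<Rightarrow> nat set set \<Rightarrow> (nat \<Rightarrow> nat set \<Rightarrow> rat) \<Rightarrow> bool" where
  "parity_circuit J F Jc V Jv A E Fv \<longleftrightarrow>
     is_circuit Jc V Jv A E \<and>
     (\<exists>v0\<in>V. is_copy J F (Jv v0) (Fv v0) \<and> (\<forall>v\<in>V - {v0}. parity_constraint (Jv v) (Fv v)))"

text \<open>Prat(F): supremum of F'(0)/F'(1) over unary parity-signatures F' of F with F'(1) > 0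
  (a positive constant multiple cancels in the ratio); 0 if F is identically zero.\<close>
definition Prat :: "'a set \<Rightarrow> ('a set \<Rightarrow> rat) \<Rightarrow> ereal" where
  "Prat J F = (if (\<forall>x. x \<subseteq> J \<longrightarrow> F x = 0) then 0 else
     Sup {ereal (real_of_rat (circuit_value Jc V Jv {a} E Fv {} / circuit_value Jc V Jv {a} E Fv {a}))
          | Jc V Jv a E Fv. parity_circuit J F Jc V Jv {a} E Fv \<and> circuit_value Jc V Jv {a} E Fv {a} > 0})"

end

theory Submission
  imports Defs
begin

(* Flipping one coordinate changes the parity of the weight, so Even and Odd are strictly terraced;
   NAE vanishes only at the empty and the full assignment, where every flip gives weight 1,
   resp. |J| - 1.

   For Prat, the assignments of a circuit that respect the internal edges and satisfy all its
   parity constraints form a family closed under x + y + z (a coset of a GF(2)-subspace).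
   If every constraint is a parity relation, two such assignments differ in a set meeting each
   vertex evenly and consisting, apart from the external incidence, of whole internal edges; so
   they agree on the external edge and F'(0) = 0 whenever F'(1) > 0.  With one NAE constraint,
   translation shows that the solutions with external value 0 are no more than those with
   value 1, and that among the latter the two fibres on which the NAE incidences are constant
   are each no larger than the fibre of a NAE-satisfying solution; hence F'(0) <= 3 F'(1). *)

lemma even_card_flip:
  assumes "finite x"
  shows "even (card (flip x i)) \<longleftrightarrow> odd (card x)"
proof (cases "i \<in> x")
  case True
  then have "card x = Suc (card (flip x i))"
    using assms card.remove[of x i] by (simp add: flip_def)
  then show ?thesis by simp
next
  case False
  then show ?thesis using assms by (simp add: flip_def)
qed

lemma flip_subset: "x \<subseteq> J \<Longrightarrow> i \<in> J \<Longrightarrow> flip x i \<subseteq> J"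
  by (auto simp: flip_def)

lemma strictly_terraced_even_rel:
  assumes "finite J"
  shows "strictly_terraced J (even_rel J)"
  unfolding strictly_terraced_def
proof (intro allI impI)
  fix x i j assume x: "x \<subseteq> J" and ij: "i \<in> J" "j \<in> J" and "even_rel J x = 0"
  then have "odd (card x)" by (simp add: even_rel_def Int_absorb2 split: if_splits)
  moreover have "finite x" using assms x by (rule finite_subset[rotated])
  ultimately show "even_rel J (flip x i) = even_rel J (flip x j)"
    using x ij by (simp add: even_rel_def Int_absorb2 flip_subset even_card_flip)
qed

lemma strictly_terraced_odd_rel:
  assumes "finite J"
  shows "strictly_terraced J (odd_rel J)"
  unfolding strictly_terraced_def
proof (intro allI impI)
  fix x i j assume x: "x \<subseteq> J" and ij: "i \<in> J" "j \<in> J" and "odd_rel J x = 0"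
  then have "even (card x)" by (simp add: odd_rel_def Int_absorb2 split: if_splits)
  moreover have "finite x" using assms x by (rule finite_subset[rotated])
  ultimately show "odd_rel J (flip x i) = odd_rel J (flip x j)"
    using x ij by (simp add: odd_rel_def Int_absorb2 flip_subset even_card_flip)
qed

lemma strictly_terraced_nae_rel:
  assumes "finite J"
  shows "strictly_terraced J (nae_rel J)"
  unfolding strictly_terraced_def
proof (intro allI impI)
  fix x i j assume x: "x \<subseteq> J" and ij: "i \<in> J" "j \<in> J" and "nae_rel J x = 0"
  then have "card x = 0 \<or> card J \<le> card x"
    by (auto simp: nae_rel_def Int_absorb2 split: if_splits)
  then have "x = {} \<or> x = J"
    using assms x by (meson card_0_eq card_seteq finite_subset)
  then have "card (flip x i) = card (flip x j)"
    using assms ij by (auto simp: flip_def)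
  then show "nae_rel J (flip x i) = nae_rel J (flip x j)"
    using x ij by (simp add: nae_rel_def Int_absorb2 flip_subset)
qed

lemma even_card_sym_diff:
  assumes "finite A" "finite B"
  shows "even (card (sym_diff A B)) \<longleftrightarrow> (even (card A) \<longleftrightarrow> even (card B))"
proof -
  have "sym_diff A B = (A \<union> B) - (A \<inter> B)" by blast
  moreover have "card (A \<union> B - A \<inter> B) = card (A \<union> B) - card (A \<inter> B)"
    using assms by (intro card_Diff_subset) auto
  moreover have "card (A \<inter> B) \<le> card (A \<union> B)"
    using assms by (intro card_mono) auto
  ultimately have "card (sym_diff A B) + card (A \<inter> B) = card (A \<union> B)" by simp
  moreover have "card (A \<union> B) + card (A \<inter> B) = card A + card B"
    using card_Un_Int[OF assms] by simp
  ultimately show ?thesis by presburger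
qed

lemma card_preimage_bij_betw:
  assumes "bij_betw \<pi> I K" "y \<subseteq> K"
  shows "card (I \<inter> \<pi> -` y) = card y"
proof -
  have "bij_betw \<pi> (I \<inter> \<pi> -` y) y"
    using assms unfolding bij_betw_def by (auto intro: inj_on_subset)
  then show ?thesis by (rule bij_betw_same_card)
qed

definition parity_relation :: "'b set \<Rightarrow> ('b set \<Rightarrow> rat) \<Rightarrow> bool" where
  "parity_relation K G \<longleftrightarrow> (\<exists>b. \<forall>y. y \<subseteq> K \<longrightarrow> G y = (if even (card y) = b then 1 else 0))"

lemma is_copy_even_rel_parity_relation:
  "is_copy I (even_rel I) K G \<Longrightarrow> parity_relation K G"
  unfolding is_copy_def parity_relation_def even_rel_def
  by (rule exI[of _ True]) (auto simp: card_preimage_bij_betw Int_absorb2)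

lemma is_copy_odd_rel_parity_relation:
  "is_copy I (odd_rel I) K G \<Longrightarrow> parity_relation K G"
  unfolding is_copy_def parity_relation_def odd_rel_def
  by (rule exI[of _ False]) (auto simp: card_preimage_bij_betw Int_absorb2)

lemma parity_constraint_imp_parity_relation:
  "parity_constraint K G \<Longrightarrow> parity_relation K G"
  unfolding parity_constraint_def
  using is_copy_even_rel_parity_relation is_copy_odd_rel_parity_relation by blast

lemma is_copy_nae_rel:
  assumes "is_copy I (nae_rel I) K G" "finite K" "y \<subseteq> K"
  shows "G y = (if y \<noteq> {} \<and> y \<noteq> K then 1 else 0)"
proof -
  obtain \<pi> where \<pi>: "bij_betw \<pi> I K" and G: "G y = nae_rel I (I \<inter> \<pi> -` y)"
    using assms(1,3) unfolding is_copy_def by blast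
  have "card I = card K" using \<pi> by (rule bij_betw_same_card)
  moreover have "1 \<le> card y \<longleftrightarrow> y \<noteq> {}"
    using finite_subset[OF assms(3,2)] by (simp add: Suc_le_eq card_gt_0_iff)
  moreover have "card y + 1 \<le> card K \<longleftrightarrow> y \<noteq> K"
  proof
    assume "y \<noteq> K"
    then have "card y < card K"
      using assms(2,3) by (simp add: psubset_card_mono psubset_eq)
    then show "card y + 1 \<le> card K" by simp
  qed auto
  ultimately show ?thesis
    using G card_preimage_bij_betw[OF \<pi> assms(3)] by (simp add: nae_rel_def Int_absorb2)
qed

lemma parity_relation_zero_or_one:
  assumes "parity_relation K G" "y \<subseteq> K"
  shows "G y = 0 \<or> G y = 1"
proof -
  obtain b where "G y = (if even (card y) = b then 1 else 0)"
    using assms unfolding parity_relation_def by blast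
  then show ?thesis by simp
qed

lemma parity_relation_sym_diff:
  assumes "parity_relation K G" "finite x" "finite y"
    and "G (x \<inter> K) = 1" "G (y \<inter> K) = 1"
  shows "even (card (sym_diff x y \<inter> K))"
proof -
  obtain b where "\<forall>w. w \<subseteq> K \<longrightarrow> G w = (if even (card w) = b then 1 else 0)"
    using assms(1) unfolding parity_relation_def by blast
  then have "even (card (x \<inter> K)) = b" "even (card (y \<inter> K)) = b"
    using assms(4,5) by (metis inf_le2 zero_neq_one)+
  moreover have "sym_diff x y \<inter> K = sym_diff (x \<inter> K) (y \<inter> K)" by blast
  ultimately show ?thesis using assms(2,3) by (simp add: even_card_sym_diff)
qed

lemma parity_relation_sym_diff3:
  assumes "parity_relation K G" "finite x" "finite y" "finite z"
    and "G (x \<inter> K) = 1" "G (y \<inter> K) = 1" "G (z \<inter> K) = 1"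
  shows "G (sym_diff (sym_diff x y) z \<inter> K) = 1"
proof -
  obtain b where b: "\<forall>w. w \<subseteq> K \<longrightarrow> G w = (if even (card w) = b then 1 else 0)"
    using assms(1) unfolding parity_relation_def by blast
  then have "even (card (z \<inter> K)) = b"
    using assms(7) by (metis inf_le2 zero_neq_one)
  moreover have "even (card (sym_diff x y \<inter> K))"
    using parity_relation_sym_diff assms by blast
  moreover have "sym_diff (sym_diff x y) z \<inter> K = sym_diff (sym_diff x y \<inter> K) (z \<inter> K)" by blast
  ultimately have "even (card (sym_diff (sym_diff x y) z \<inter> K)) = b"
    using assms(2-4) by (simp add: even_card_sym_diff)
  then show ?thesis using b by simp
qed

lemma is_circuitD:
  assumes "is_circuit Jc V Jv A E"
  shows "finite Jc" "finite V" "(\<Union>v\<in>V. Jv v) = Jc"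
    "\<forall>v\<in>V. \<forall>w\<in>V. v \<noteq> w \<longrightarrow> Jv v \<inter> Jv w = {}"
    "\<forall>e\<in>E. card e = 2" "\<Union>E = Jc - A" "\<forall>e\<in>E. \<forall>f\<in>E. e \<noteq> f \<longrightarrow> e \<inter> f = {}"
  using assms unfolding is_circuit_def by simp_all

definition respects_edges :: "nat set set \<Rightarrow> nat set \<Rightarrow> bool" where
  "respects_edges E x \<longleftrightarrow> (\<forall>e\<in>E. e \<subseteq> x \<or> e \<inter> x = {})"

lemma respects_edges_sym_diff:
  "respects_edges E x \<Longrightarrow> respects_edges E y \<Longrightarrow> respects_edges E (sym_diff x y)"
  unfolding respects_edges_def by blast

lemma circuit_value_def':
  "circuit_value Jc V Jv A E Fv X =
     (\<Sum>x \<in> {x. x \<subseteq> Jc \<and> x \<inter> A = X \<and> respects_edges E x}. \<Prod>v\<in>V. Fv v (x \<inter> Jv v))"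
  unfolding circuit_value_def respects_edges_def ..

definition parity_solutions ::
    "nat set \<Rightarrow> nat set \<Rightarrow> (nat \<Rightarrow> nat set) \<Rightarrow> nat set set \<Rightarrow> (nat \<Rightarrow> nat set \<Rightarrow> rat) \<Rightarrow> nat set set" where
  "parity_solutions Jc W Jv E Fv =
     {x. x \<subseteq> Jc \<and> respects_edges E x \<and> (\<forall>v\<in>W. Fv v (x \<inter> Jv v) = 1)}"

lemma finite_parity_solutions: "finite Jc \<Longrightarrow> finite (parity_solutions Jc W Jv E Fv)"
  unfolding parity_solutions_def by (rule finite_subset[of _ "Pow Jc"]) auto

lemma sym_diff3_mem_parity_solutions:
  assumes "finite Jc" "\<forall>v\<in>W. parity_relation (Jv v) (Fv v)"
    and "x \<in> parity_solutions Jc W Jv E Fv" "y \<in> parity_solutions Jc W Jv E Fv"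
      "z \<in> parity_solutions Jc W Jv E Fv"
  shows "sym_diff (sym_diff x y) z \<in> parity_solutions Jc W Jv E Fv"
proof -
  have fin: "finite x" "finite y" "finite z"
    using assms(1,3-5) unfolding parity_solutions_def by (auto intro: finite_subset)
  show ?thesis
    using assms(2-5) parity_relation_sym_diff3[OF _ fin] respects_edges_sym_diff
    unfolding parity_solutions_def by auto
qed

lemma even_card_if_even_on_vertices:
  assumes "is_circuit Jc V Jv A E" "d \<subseteq> Jc" "\<forall>v\<in>V. even (card (d \<inter> Jv v))"
  shows "even (card d)"
proof -
  note circ = is_circuitD(1-4)[OF assms(1)]
  have "finite d" using circ(1) assms(2) by (rule finite_subset[rotated])
  have "d = (\<Union>v\<in>V. d \<inter> Jv v)"
    using assms(2) circ(3) by blast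
  also have "card \<dots> = (\<Sum>v\<in>V. card (d \<inter> Jv v))"
    using circ(2,4) \<open>finite d\<close> by (intro card_UN_disjoint) blast+
  finally show ?thesis using assms(3) by (simp add: dvd_sum)
qed

lemma even_card_diff_external:
  assumes "is_circuit Jc V Jv A E" "d \<subseteq> Jc" "respects_edges E d"
  shows "even (card (d - A))"
proof -
  note edges = is_circuitD(5-7)[OF assms(1)]
  let ?E = "{e \<in> E. e \<subseteq> d}"
  have "d - A = \<Union>?E"
    using assms(2,3) edges(2) unfolding respects_edges_def by blast
  also have "card \<dots> = (\<Sum>e\<in>?E. card e)"
  proof (rule card_Union_disjoint)
    show "pairwise disjnt ?E"
      using edges(3) unfolding pairwise_def disjnt_def by blast
    show "finite e" if "e \<in> ?E" for e
      using edges(1) that by (intro card_ge_0_finite) simp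
  qed
  finally show ?thesis using edges(1) by (simp add: dvd_sum)
qed

(* The difference of two solutions meets every vertex evenly, and outside the external incidence
   it is a union of internal edges. *)
lemma parity_solutions_agree_on_external:
  assumes circ: "is_circuit Jc V Jv {a} E" and par: "\<forall>v\<in>V. parity_relation (Jv v) (Fv v)"
    and "x \<in> parity_solutions Jc V Jv E Fv" "y \<in> parity_solutions Jc V Jv E Fv"
  shows "a \<in> x \<longleftrightarrow> a \<in> y"
proof (rule ccontr)
  let ?d = "sym_diff x y"
  assume "\<not> (a \<in> x \<longleftrightarrow> a \<in> y)"
  then have "a \<in> ?d" by blast
  have "finite Jc" using is_circuitD(1)[OF circ] .
  have sol: "x \<subseteq> Jc" "y \<subseteq> Jc" "respects_edges E x" "respects_edges E y"
    "\<forall>v\<in>V. Fv v (x \<inter> Jv v) = 1" "\<forall>v\<in>V. Fv v (y \<inter> Jv v) = 1"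
    using assms(3,4) unfolding parity_solutions_def by blast+
  then have "finite x" "finite y" "?d \<subseteq> Jc"
    using \<open>finite Jc\<close> by (auto intro: finite_subset)
  have "even (card ?d)"
    using even_card_if_even_on_vertices[OF circ \<open>?d \<subseteq> Jc\<close>]
      parity_relation_sym_diff[OF _ \<open>finite x\<close> \<open>finite y\<close>] par sol(5,6) by blast
  moreover have "even (card (?d - {a}))"
    using even_card_diff_external[OF circ \<open>?d \<subseteq> Jc\<close>] respects_edges_sym_diff sol(3,4) by blast
  moreover have "card ?d = Suc (card (?d - {a}))"
    using \<open>a \<in> ?d\<close> \<open>finite x\<close> \<open>finite y\<close> by (intro card.remove) auto
  ultimately show False by simp
qed

lemma circuit_value_nonzero_imp_parity_solution:
  assumes circ: "is_circuit Jc V Jv A E" and par: "\<forall>v\<in>V. parity_relation (Jv v) (Fv v)"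
    and "circuit_value Jc V Jv A E Fv X \<noteq> 0"
  obtains x where "x \<in> parity_solutions Jc V Jv E Fv" "x \<inter> A = X"
proof -
  obtain x where x: "x \<in> {x. x \<subseteq> Jc \<and> x \<inter> A = X \<and> respects_edges E x}"
    and nz: "(\<Prod>v\<in>V. Fv v (x \<inter> Jv v)) \<noteq> 0"
    using assms(3) unfolding circuit_value_def' by (rule sum.not_neutral_contains_not_neutral)
  have "Fv v (x \<inter> Jv v) = 1" if v: "v \<in> V" for v
  proof -
    have "Fv v (x \<inter> Jv v) \<noteq> 0"
      using nz v is_circuitD(2)[OF circ] by simp
    then show ?thesis
      using parity_relation_zero_or_one[of "Jv v" "Fv v" "x \<inter> Jv v"] par v by blast
  qed
  then show ?thesis
    using that x unfolding parity_solutions_def by blast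
qed

lemma circuit_value_unary_eq_0:
  assumes circ: "is_circuit Jc V Jv {a} E" and par: "\<forall>v\<in>V. parity_relation (Jv v) (Fv v)"
    and one: "circuit_value Jc V Jv {a} E Fv {a} \<noteq> 0"
  shows "circuit_value Jc V Jv {a} E Fv {} = 0"
proof (rule ccontr)
  assume "circuit_value Jc V Jv {a} E Fv {} \<noteq> 0"
  then obtain x where x: "x \<in> parity_solutions Jc V Jv E Fv" "x \<inter> {a} = {}"
    by (rule circuit_value_nonzero_imp_parity_solution[OF circ par])
  obtain y where y: "y \<in> parity_solutions Jc V Jv E Fv" "y \<inter> {a} = {a}"
    using one by (rule circuit_value_nonzero_imp_parity_solution[OF circ par])
  have "a \<in> x \<longleftrightarrow> a \<in> y"
    using parity_solutions_agree_on_external[OF circ par x(1) y(1)] .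
  with x(2) y(2) show False by blast
qed

definition sym_diff3_closed :: "'b set set \<Rightarrow> bool" where
  "sym_diff3_closed M \<longleftrightarrow> (\<forall>x\<in>M. \<forall>y\<in>M. \<forall>z\<in>M. sym_diff (sym_diff x y) z \<in> M)"

(* u \<mapsto> u + y + x maps the fibre of u \<mapsto> u \<inter> T through y injectively into the fibre through x. *)
lemma card_fibre_le_sym_diff3_closed:
  assumes "finite M" "sym_diff3_closed M" "x \<in> M"
  shows "card {u \<in> M. u \<inter> T = z} \<le> card {u \<in> M. u \<inter> T = x \<inter> T}"
proof (cases "{u \<in> M. u \<inter> T = z} = {}")
  case True
  then show ?thesis by (simp only: card.empty zero_le)
next
  case False
  then obtain y where y: "y \<in> M" "y \<inter> T = z" by blast
  let ?f = "\<lambda>u. sym_diff (sym_diff u y) x"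
  show ?thesis
  proof (rule card_inj_on_le)
    show "inj_on ?f {u \<in> M. u \<inter> T = z}"
      by (rule inj_onI) (auto simp: set_eq_iff)
    show "?f ` {u \<in> M. u \<inter> T = z} \<subseteq> {u \<in> M. u \<inter> T = x \<inter> T}"
      using assms(2,3) y unfolding sym_diff3_closed_def by blast
    show "finite {u \<in> M. u \<inter> T = x \<inter> T}"
      using assms(1) by simp
  qed
qed

lemma card_not_mem_le_three_card_nae:
  assumes "finite M" "sym_diff3_closed M" "x \<in> M" "a \<in> x" "x \<inter> S \<noteq> {}" "x \<inter> S \<noteq> S"
  shows "card {u \<in> M. a \<notin> u} \<le> 3 * card {u \<in> M. a \<in> u \<and> u \<inter> S \<noteq> {} \<and> u \<inter> S \<noteq> S}"
proof -
  let ?G = "{u \<in> M. a \<in> u \<and> u \<inter> S \<noteq> {} \<and> u \<inter> S \<noteq> S}"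
  let ?B = "\<lambda>z. {u \<in> M. u \<inter> insert a S = insert a z}"
  have fibre: "card (?B z) \<le> card ?G" for z
  proof -
    have "card (?B z) \<le> card {u \<in> M. u \<inter> insert a S = x \<inter> insert a S}"
      using assms(1-3) by (rule card_fibre_le_sym_diff3_closed)
    also have "\<dots> \<le> card ?G"
      using assms(1,4-6) by (intro card_mono) auto
    finally show ?thesis .
  qed
  have "card {u \<in> M. a \<notin> u} = card {u \<in> M. u \<inter> {a} = {}}"
    by (rule arg_cong[of _ _ card]) blast
  also have "\<dots> \<le> card {u \<in> M. u \<inter> {a} = x \<inter> {a}}"
    using assms(1-3) by (rule card_fibre_le_sym_diff3_closed)
  also have "\<dots> \<le> card (?G \<union> ?B {} \<union> ?B S)"
    using assms(1,4) by (intro card_mono) auto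
  also have "\<dots> \<le> card ?G + card (?B {}) + card (?B S)"
    by (meson add_le_mono card_Un_le le_refl order_trans)
  also have "\<dots> \<le> 3 * card ?G"
    using fibre[of "{}"] fibre[of S] by simp
  finally show ?thesis .
qed

lemma circuit_value_eq_sum_parity_solutions:
  assumes circ: "is_circuit Jc V Jv A E" and "v0 \<in> V"
    and par: "\<forall>v\<in>V - {v0}. parity_relation (Jv v) (Fv v)"
  shows "circuit_value Jc V Jv A E Fv X =
    (\<Sum>x \<in> {x \<in> parity_solutions Jc (V - {v0}) Jv E Fv. x \<inter> A = X}. Fv v0 (x \<inter> Jv v0))"
  unfolding circuit_value_def'
proof (rule sum.mono_neutral_cong_right)
  let ?T = "{x. x \<subseteq> Jc \<and> x \<inter> A = X \<and> respects_edges E x}"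
  let ?S = "{x \<in> parity_solutions Jc (V - {v0}) Jv E Fv. x \<inter> A = X}"
  have "finite V" using is_circuitD(2)[OF circ] .
  show "finite ?T"
    using is_circuitD(1)[OF circ] by (intro finite_subset[of ?T "Pow Jc"]) auto
  show "?S \<subseteq> ?T"
    unfolding parity_solutions_def by blast
  show "\<forall>x \<in> ?T - ?S. (\<Prod>v\<in>V. Fv v (x \<inter> Jv v)) = 0"
  proof
    fix x assume x: "x \<in> ?T - ?S"
    obtain v where v: "v \<in> V - {v0}" "Fv v (x \<inter> Jv v) \<noteq> 1"
      using x unfolding parity_solutions_def by blast
    then have "Fv v (x \<inter> Jv v) = 0"
      using parity_relation_zero_or_one[of "Jv v" "Fv v" "x \<inter> Jv v"] par by blast
    then show "(\<Prod>v\<in>V. Fv v (x \<inter> Jv v)) = 0"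
      using v(1) \<open>finite V\<close> by (meson DiffD1 prod_zero_iff)
  qed
  show "(\<Prod>v\<in>V. Fv v (x \<inter> Jv v)) = Fv v0 (x \<inter> Jv v0)" if "x \<in> ?S" for x
  proof -
    have "(\<Prod>v\<in>V - {v0}. Fv v (x \<inter> Jv v)) = 1"
      using that unfolding parity_solutions_def by (intro prod.neutral) blast
    then show ?thesis
      using prod.remove[OF \<open>finite V\<close> \<open>v0 \<in> V\<close>, of "\<lambda>v. Fv v (x \<inter> Jv v)"] by simp
  qed
qed

lemma circuit_value_nae_le:
  assumes circ: "is_circuit Jc V Jv {a} E" and "v0 \<in> V"
    and nae: "\<forall>y. y \<subseteq> Jv v0 \<longrightarrow> Fv v0 y = (if y \<noteq> {} \<and> y \<noteq> Jv v0 then 1 else 0)"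
    and par: "\<forall>v\<in>V - {v0}. parity_relation (Jv v) (Fv v)"
    and one: "circuit_value Jc V Jv {a} E Fv {a} \<noteq> 0"
  shows "circuit_value Jc V Jv {a} E Fv {} \<le> 3 * circuit_value Jc V Jv {a} E Fv {a}"
proof -
  let ?M = "parity_solutions Jc (V - {v0}) Jv E Fv"
  let ?S = "Jv v0"
  let ?G = "{u \<in> ?M. a \<in> u \<and> u \<inter> ?S \<noteq> {} \<and> u \<inter> ?S \<noteq> ?S}"
  have "finite ?M" using is_circuitD(1)[OF circ] by (rule finite_parity_solutions)
  have val: "circuit_value Jc V Jv {a} E Fv X =
      (\<Sum>u \<in> {u \<in> ?M. u \<inter> {a} = X}. if u \<inter> ?S \<noteq> {} \<and> u \<inter> ?S \<noteq> ?S then 1 else 0)" for X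
    unfolding circuit_value_eq_sum_parity_solutions[OF circ \<open>v0 \<in> V\<close> par]
    using nae by (intro sum.cong) auto
  have one_eq: "circuit_value Jc V Jv {a} E Fv {a} = of_nat (card ?G)"
  proof -
    have "{u \<in> {u \<in> ?M. u \<inter> {a} = {a}}. u \<inter> ?S \<noteq> {} \<and> u \<inter> ?S \<noteq> ?S} = ?G" by blast
    then show ?thesis
      unfolding val using \<open>finite ?M\<close> by (simp add: sum.inter_filter[symmetric])
  qed
  have zero_le: "circuit_value Jc V Jv {a} E Fv {} \<le> of_nat (card {u \<in> ?M. a \<notin> u})"
  proof -
    have "{u \<in> ?M. u \<inter> {a} = {}} = {u \<in> ?M. a \<notin> u}" by blast
    then have "circuit_value Jc V Jv {a} E Fv {} =
        (\<Sum>u \<in> {u \<in> ?M. a \<notin> u}. if u \<inter> ?S \<noteq> {} \<and> u \<inter> ?S \<noteq> ?S then 1 else 0)"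
      unfolding val by simp
    also have "\<dots> \<le> of_nat (card {u \<in> ?M. a \<notin> u}) * 1"
      by (rule sum_bounded_above) simp
    finally show ?thesis by simp
  qed
  have "?G \<noteq> {}"
    using one unfolding one_eq by (metis card.empty of_nat_0)
  then obtain x where "x \<in> ?G" by blast
  moreover have "sym_diff3_closed ?M"
    unfolding sym_diff3_closed_def
    using sym_diff3_mem_parity_solutions[OF is_circuitD(1)[OF circ] par] by blast
  ultimately have "card {u \<in> ?M. a \<notin> u} \<le> 3 * card ?G"
    using card_not_mem_le_three_card_nae[OF \<open>finite ?M\<close>] by blast
  then have "(of_nat (card {u \<in> ?M. a \<notin> u}) :: rat) \<le> of_nat (3 * card ?G)"
    by (simp only: of_nat_le_iff)
  with zero_le show ?thesis
    unfolding one_eq by simp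
qed

lemma Prat_le:
  fixes c :: rat
  assumes "0 \<le> c"
    and bound: "\<And>Jc V Jv a E Fv. parity_circuit J F Jc V Jv {a} E Fv \<Longrightarrow>
      0 < circuit_value Jc V Jv {a} E Fv {a} \<Longrightarrow>
      circuit_value Jc V Jv {a} E Fv {} \<le> c * circuit_value Jc V Jv {a} E Fv {a}"
  shows "Prat J F \<le> ereal (of_rat c)"
proof (cases "\<forall>x. x \<subseteq> J \<longrightarrow> F x = 0")
  case True
  then show ?thesis
    using assms(1) by (simp add: Prat_def zero_ereal_def)
next
  case False
  have "Sup {ereal (of_rat (circuit_value Jc V Jv {a} E Fv {} / circuit_value Jc V Jv {a} E Fv {a}))
      | Jc V Jv a E Fv. parity_circuit J F Jc V Jv {a} E Fv \<and> 0 < circuit_value Jc V Jv {a} E Fv {a}}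
    \<le> ereal (of_rat c)"
  proof (rule Sup_least, clarify)
    fix Jc V Jv a E Fv
    assume "parity_circuit J F Jc V Jv {a} E Fv" "0 < circuit_value Jc V Jv {a} E Fv {a}"
    then have "circuit_value Jc V Jv {a} E Fv {} / circuit_value Jc V Jv {a} E Fv {a} \<le> c"
      using bound by (simp add: divide_le_eq)
    then show "ereal (of_rat (circuit_value Jc V Jv {a} E Fv {} / circuit_value Jc V Jv {a} E Fv {a}))
        \<le> ereal (of_rat c)"
      by (simp add: of_rat_less_eq)
  qed
  with False show ?thesis
    unfolding Prat_def by (simp only: if_False)
qed

lemma Prat_ge:
  assumes "\<not> (\<forall>x. x \<subseteq> J \<longrightarrow> F x = 0)" "parity_circuit J F Jc V Jv {a} E Fv"
    "0 < circuit_value Jc V Jv {a} E Fv {a}"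
  shows "ereal (of_rat (circuit_value Jc V Jv {a} E Fv {} / circuit_value Jc V Jv {a} E Fv {a}))
    \<le> Prat J F"
  unfolding Prat_def using assms(1) by (simp only: if_False) (rule Sup_upper, use assms(2,3) in blast)

lemma is_circuit_doubled:
  "is_circuit {0..2*n} {0, 1} (\<lambda>v. if v = 0 then {0..<n} else {n..2*n}) {2*n}
     ((\<lambda>i. {i, n + i}) ` {0..<n})"
  unfolding is_circuit_def
proof (intro conjI)
  show "\<Union> ((\<lambda>i. {i, n + i}) ` {0..<n}) = {0..2*n} - {2*n}"
  proof
    show "{0..2*n} - {2*n} \<subseteq> \<Union> ((\<lambda>i. {i, n + i}) ` {0..<n})"
    proof
      fix p assume "p \<in> {0..2*n} - {2*n}"
      then have "p < n \<or> (p = n + (p - n) \<and> p - n < n)" by auto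
      then show "p \<in> \<Union> ((\<lambda>i. {i, n + i}) ` {0..<n})" by force
    qed
  qed auto
qed auto

lemma ex_parity_circuit_value_pos:
  assumes "finite J" "y0 \<subseteq> J" "0 < F y0" "\<forall>z. z \<subseteq> J \<longrightarrow> 0 \<le> F z"
  obtains Jc V Jv a E Fv where "parity_circuit J F Jc V Jv {a} E Fv"
    "0 < circuit_value Jc V Jv {a} E Fv {a}"
proof -
  define n where "n = card J"
  obtain h where h: "bij_betw h J {0..<n}"
    using ex_bij_betw_finite_nat[OF assms(1)] unfolding n_def by blast
  define K where "K = {n..2*n}"
  define Jv where "Jv v = (if v = 0 then {0..<n} else K)" for v :: nat
  define E where "E = (\<lambda>i. {i, n + i}) ` {0..<n}"
  \<comment> \<open>the parity of card y0 + 1: the doubled copy of y0 plus the external incidence satisfies G\<close>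
  define G where "G = (if even (card y0) then odd_rel K else even_rel K)"
  define Fv where "Fv v = (if v = 0 then (\<lambda>z. F (J \<inter> h -` z)) else G)" for v :: nat
  have circ: "is_circuit {0..2*n} {0, 1} Jv {2*n} E"
    unfolding Jv_def K_def E_def by (rule is_circuit_doubled)
  have "parity_circuit J F {0..2*n} {0, 1} Jv {2*n} E Fv"
    unfolding parity_circuit_def
  proof (intro conjI bexI[of _ 0])
    show "is_copy J F (Jv 0) (Fv 0)"
      unfolding is_copy_def Jv_def Fv_def using h by auto
    have "is_copy K (even_rel K) K (even_rel K)" "is_copy K (odd_rel K) K (odd_rel K)"
      unfolding is_copy_def by (auto intro!: exI[of _ id] simp: Int_absorb1)
    then show "\<forall>v\<in>{0, 1} - {0}. parity_constraint (Jv v) (Fv v)"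
      unfolding parity_constraint_def Jv_def Fv_def G_def K_def by auto
  qed (use circ in auto)
  moreover have "0 < circuit_value {0..2*n} {0, 1} Jv {2*n} E Fv {2*n}"
  proof -
    define Y where "Y = h ` y0"
    define x where "x = Y \<union> (\<lambda>i. n + i) ` Y \<union> {2*n}"
    have inj: "inj_on h J" and hJ: "h ` J = {0..<n}"
      using h unfolding bij_betw_def by blast+
    have Y: "Y \<subseteq> {0..<n}" "J \<inter> h -` Y = y0" "card Y = card y0"
    proof -
      show "Y \<subseteq> {0..<n}" unfolding Y_def using hJ assms(2) by blast
      show "J \<inter> h -` Y = y0" unfolding Y_def using inj assms(2) by (auto simp: inj_on_def)
      show "card Y = card y0" unfolding Y_def using inj_on_subset[OF inj assms(2)] by (rule card_image)
    qed
    have "x \<in> {x. x \<subseteq> {0..2*n} \<and> x \<inter> {2*n} = {2*n} \<and> respects_edges E x}"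
      using Y(1) unfolding x_def E_def respects_edges_def by auto
    moreover have "0 < (\<Prod>v\<in>{0, 1}. Fv v (x \<inter> Jv v))"
    proof -
      have "x \<inter> Jv 0 = Y" using Y(1) unfolding x_def Jv_def by auto
      then have pos0: "0 < Fv 0 (x \<inter> Jv 0)" using assms(3) Y(2) unfolding Fv_def by simp
      have x1: "x \<inter> Jv 1 = insert (2*n) ((\<lambda>i. n + i) ` Y)"
        using Y(1) unfolding x_def Jv_def K_def by auto
      have "finite Y" "2*n \<notin> (\<lambda>i. n + i) ` Y"
        using Y(1) finite_subset by auto
      then have "card (x \<inter> Jv 1) = Suc (card y0)" and "x \<inter> Jv 1 \<subseteq> K"
        using Y unfolding x1 K_def by (auto simp: card_image)
      then have "Fv 1 (x \<inter> Jv 1) = 1"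
        unfolding Fv_def G_def by (simp add: even_rel_def odd_rel_def Int_absorb2)
      with pos0 show ?thesis by simp
    qed
    moreover have "0 \<le> (\<Prod>v\<in>{0, 1}. Fv v (u \<inter> Jv v))" for u
      using assms(4) unfolding Fv_def G_def
      by (simp add: even_rel_def odd_rel_def)
    ultimately show ?thesis
      unfolding circuit_value_def' by (intro sum_pos2) (auto intro: finite_subset[of _ "Pow {0..2*n}"])
  qed
  ultimately show ?thesis using that by blast
qed

lemma Prat_nae_rel_le_3:
  assumes "finite J"
  shows "Prat J (nae_rel J) \<le> 3"
proof -
  have "Prat J (nae_rel J) \<le> ereal (of_rat 3)"
  proof (rule Prat_le)
    fix Jc V Jv a E Fv
    assume "parity_circuit J (nae_rel J) Jc V Jv {a} E Fv"
      and pos: "0 < circuit_value Jc V Jv {a} E Fv {a}"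
    then obtain v0 where circ: "is_circuit Jc V Jv {a} E" and "v0 \<in> V"
      and copy: "is_copy J (nae_rel J) (Jv v0) (Fv v0)"
      and par: "\<forall>v\<in>V - {v0}. parity_constraint (Jv v) (Fv v)"
      unfolding parity_circuit_def by blast
    have "finite (Jv v0)"
      using is_circuitD(1,3)[OF circ] \<open>v0 \<in> V\<close> by (metis UN_upper finite_subset)
    then show "circuit_value Jc V Jv {a} E Fv {} \<le> 3 * circuit_value Jc V Jv {a} E Fv {a}"
      using circuit_value_nae_le[OF circ \<open>v0 \<in> V\<close>] is_copy_nae_rel[OF copy]
        parity_constraint_imp_parity_relation par pos by simp
  qed simp
  then show ?thesis by simp
qed

lemma Prat_eq_0_if_copies_parity_relation:
  assumes "finite J" "\<forall>z. z \<subseteq> J \<longrightarrow> 0 \<le> F z"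
    and copies: "\<And>(K :: nat set) G. is_copy J F K G \<Longrightarrow> parity_relation K G"
  shows "Prat J F = 0"
proof (cases "\<forall>x. x \<subseteq> J \<longrightarrow> F x = 0")
  case True
  then show ?thesis by (simp add: Prat_def)
next
  case False
  have value_0: "circuit_value Jc V Jv {a} E Fv {} = 0"
    if pc: "parity_circuit J F Jc V Jv {a} E Fv" and pos: "0 < circuit_value Jc V Jv {a} E Fv {a}"
    for Jc V Jv a E Fv
  proof -
    obtain v0 where circ: "is_circuit Jc V Jv {a} E" and "v0 \<in> V"
      and "is_copy J F (Jv v0) (Fv v0)" "\<forall>v\<in>V - {v0}. parity_constraint (Jv v) (Fv v)"
      using pc unfolding parity_circuit_def by blast
    then have "\<forall>v\<in>V. parity_relation (Jv v) (Fv v)"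
      using copies parity_constraint_imp_parity_relation by (metis Diff_iff singletonD)
    then show ?thesis
      using circuit_value_unary_eq_0[OF circ] pos by simp
  qed
  have "Prat J F \<le> ereal (of_rat 0)"
    by (rule Prat_le) (simp_all add: value_0)
  moreover obtain y0 where "y0 \<subseteq> J" "0 < F y0"
    using False assms(2) by (metis order_le_less)
  then obtain Jc V Jv a E Fv where pc: "parity_circuit J F Jc V Jv {a} E Fv"
    and pos: "0 < circuit_value Jc V Jv {a} E Fv {a}"
    using ex_parity_circuit_value_pos[OF assms(1)] assms(2) by blast
  have "ereal (of_rat (circuit_value Jc V Jv {a} E Fv {} / circuit_value Jc V Jv {a} E Fv {a}))
      \<le> Prat J F"
    using False pc pos by (rule Prat_ge)
  then have "0 \<le> Prat J F"
    using value_0[OF pc pos] by (simp add: zero_ereal_def)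
  ultimately show ?thesis by (metis antisym of_rat_0 zero_ereal_def)
qed

theorem lemma13:
  fixes J :: "'a set"
  assumes "finite J"
  shows "strictly_terraced J (even_rel J) \<and> strictly_terraced J (odd_rel J) \<and>
         strictly_terraced J (nae_rel J) \<and>
         Prat J (even_rel J) = 0 \<and> Prat J (odd_rel J) = 0 \<and> Prat J (nae_rel J) \<le> 3"
proof (intro conjI)
  show "Prat J (even_rel J) = 0"
    using assms is_copy_even_rel_parity_relation
    by (intro Prat_eq_0_if_copies_parity_relation) (auto simp: even_rel_def)
  show "Prat J (odd_rel J) = 0"
    using assms is_copy_odd_rel_parity_relation
    by (intro Prat_eq_0_if_copies_parity_relation) (auto simp: odd_rel_def)
qed (use assms strictly_terraced_even_rel strictly_terraced_odd_rel strictly_terraced_nae_rel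
      Prat_nae_rel_le_3 in blast)+

end
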